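(* Let $R,S$ be (possibly empty) chains and let $T$ be the chain $T=[R^*\,1\,1\,2\,2\,S]$ (concatenation). If $\mathcal{Z}(T)>\tfrac13$, then $\rho_S>\rho_R$ (i.e. $[S]<[R]$ in the paper's ordering).
   Context: A chain is a finite sequence $T=[a_1a_2\dots a_n]$ of positive integers. For a chain $S=[s_1\dots s_m]$ write $\rho_S=[0;s_1,\dots,s_m]$, with $\rho_\emptyset=0$ for the empty chain, and $[s_1;s_2,\dots,s_m]$ for the finite continued fraction, which equals $1/\rho_S$. The reverse of $R=[r_1\dots r_k]$ is $R^*=[r_k\dots r_1]$. Define $\mathcal{Z}(T)=\big(\max_{1\le i\le n}([a_i;a_{i+1},\dots,a_n]+[0;a_{i-1},\dots,a_1])\big)^{-1}$, where for $i=1$ the second summand is $0$. The paper orders chains by $[T_1]<[T_2]\iff\rho_{T_1}>\rho_{T_2}$. *)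

theory Defs
  imports Complex_Main
begin

fun cf :: "nat list \<Rightarrow> real" where
  "cf [] = 0"
| "cf [a] = real a"
| "cf (a # b # xs) = real a + 1 / cf (b # xs)"

definition rho :: "nat list \<Rightarrow> real" where
  "rho S = (if S = [] then 0 else 1 / cf S)"

definition chain :: "nat list \<Rightarrow> bool" where
  "chain T \<longleftrightarrow> (\<forall>a\<in>set T. 0 < a)"

text \<open>Z(T) = (max_i ([a_i; a_{i+1},...,a_n] + [0; a_{i-1},...,a_1]))^{-1},
  with 0-based index i ranging over positions of T.\<close>
definition Zf :: "nat list \<Rightarrow> real" where
  "Zf T = 1 / Max ((\<lambda>i. cf (drop i T) + rho (rev (take i T))) ` {..<length T})"

end

theory Submission
  imports Defs
begin

text \<open>At the position of the first 2 in \<open>T\<close> the quantity maximised in \<open>Zf T\<close> equals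
  \<open>2 + 1/(2 + \<rho>\<^sub>S) + (1 + \<rho>\<^sub>R)/(2 + \<rho>\<^sub>R) = 3 + 1/(2 + \<rho>\<^sub>S) - 1/(2 + \<rho>\<^sub>R)\<close>,
  and \<open>Zf T > 1/3\<close> forces it below 3.\<close>

lemma cf_Cons: "cf (a # L) = real a + rho L"
  by (cases L) (auto simp: rho_def)

lemma rho_Cons: "rho (a # L) = 1 / (real a + rho L)"
  by (simp add: rho_def cf_Cons)

lemma chain_Cons: "chain (a # L) \<longleftrightarrow> 0 < a \<and> chain L"
  by (simp add: chain_def)

lemma cf_ge_1: "chain L \<Longrightarrow> L \<noteq> [] \<Longrightarrow> cf L \<ge> 1"
proof (induction L)
  case Nil
  then show ?case by simp
next
  case (Cons a L)
  then have a: "real a \<ge> 1" by (simp add: chain_Cons)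
  show ?case
  proof (cases "L = []")
    case True
    then show ?thesis using a by simp
  next
    case False
    with Cons have "cf L \<ge> 1" by (simp add: chain_Cons)
    with False have "rho L \<ge> 0" by (simp add: rho_def)
    with a show ?thesis by (simp add: cf_Cons)
  qed
qed

lemma rho_nonneg: "chain L \<Longrightarrow> rho L \<ge> 0"
  using cf_ge_1[of L] by (cases "L = []") (auto simp: rho_def)

lemma Zf_gt_inverse_imp_less:
  assumes "Zf T > 1 / c" and "c > 0" and "i < length T"
  shows "cf (drop i T) + rho (rev (take i T)) < c"
proof -
  define M where "M = Max ((\<lambda>i. cf (drop i T) + rho (rev (take i T))) ` {..<length T})"
  have le_M: "cf (drop i T) + rho (rev (take i T)) \<le> M"
    unfolding M_def using assms(3) by (intro Max_ge) auto
  have "1 / M > 1 / c"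
    using assms(1) by (simp add: Zf_def M_def)
  with \<open>c > 0\<close> have "M > 0"
    by (smt (verit) divide_pos_pos[of 1 c] divide_nonneg_nonpos[of 1 M])
  with \<open>1 / M > 1 / c\<close> \<open>c > 0\<close> have "M < c"
    by (simp add: field_simps)
  with le_M show ?thesis by simp
qed

theorem lemma3p4:
  fixes R S :: "nat list"
  assumes "chain R" and "chain S"
    and "Zf (rev R @ [1, 1, 2, 2] @ S) > 1 / 3"
  shows "rho S > rho R"
proof -
  define T where "T = rev R @ [1, 1, 2, 2] @ S"
  define x where "x = rho S"
  define y where "y = rho R"
  have "x \<ge> 0" "y \<ge> 0"
    using rho_nonneg assms(1,2) by (auto simp: x_def y_def)
  have "drop (length R + 2) T = 2 # 2 # S" "rev (take (length R + 2) T) = 1 # 1 # R"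
    by (simp_all add: T_def)
  then have "cf (drop (length R + 2) T) + rho (rev (take (length R + 2) T))
      = 3 + 1 / (2 + x) - 1 / (2 + y)"
    using \<open>y \<ge> 0\<close> by (simp add: cf_Cons rho_Cons x_def y_def field_simps)
  moreover have "cf (drop (length R + 2) T) + rho (rev (take (length R + 2) T)) < 3"
    using assms(3) by (intro Zf_gt_inverse_imp_less) (auto simp: T_def)
  ultimately have "1 / (2 + x) < 1 / (2 + y)" by simp
  with \<open>x \<ge> 0\<close> \<open>y \<ge> 0\<close> have "x > y"
    by (simp add: field_simps)
  then show ?thesis by (simp add: x_def y_def)
qed

end
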